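(* Let $\alpha\in(0,1)$ be irrational with continued fraction coefficients satisfying $\limsup_{n\to\infty}a_n=1$ (i.e. $a_n=1$ for all sufficiently large $n$). Then for every $\theta\in[0,1)$ and every real $\lambda\neq0$, the operator $H_{\lambda,\alpha,\theta}$ has no eigenvalues.
   Context: $\alpha=[a_1,a_2,\ldots]=1/(a_1+1/(a_2+\cdots))$ with $a_n\in\mathbb N$. $v_{\alpha,\theta}(n)=\chi_{[1-\alpha,1)}(n\alpha+\theta \bmod 1)$ for $n\in\mathbb Z$, and $H_{\lambda,\alpha,\theta}$ acts on $\ell^2(\mathbb Z)$ by $(H_{\lambda,\alpha,\theta}u)(n)=u(n+1)+u(n-1)+\lambda v_{\alpha,\theta}(n)u(n)$. "No eigenvalues" means there is no $E$ and nonzero $u\in\ell^2(\mathbb Z)$ with $H_{\lambda,\alpha,\theta}u=Eu$. *)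

theory Defs
  imports "HOL-Analysis.Analysis"
begin

fun gauss_iter :: "real \<Rightarrow> nat \<Rightarrow> real" where
  "gauss_iter x 0 = x"
| "gauss_iter x (Suc n) = frac (1 / gauss_iter x n)"

text \<open>Continued fraction coefficients: alpha = [a_1, a_2, ...] = 1/(a_1 + 1/(a_2 + ...)),
  with a_(n+1) = floor (1 / x_n). So cf_coeff alpha 1 = a_1, etc.\<close>
definition cf_coeff :: "real \<Rightarrow> nat \<Rightarrow> int" where
  "cf_coeff x n = \<lfloor>1 / gauss_iter x (n - 1)\<rfloor>"

definition sturm_pot :: "real \<Rightarrow> real \<Rightarrow> int \<Rightarrow> real" where
  "sturm_pot \<alpha> \<theta> n = indicator {1 - \<alpha> ..< 1} (frac (of_int n * \<alpha> + \<theta>))"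

text \<open>u is an l^2(Z) eigenvector of H_{lambda,alpha,theta} with eigenvalue E.\<close>
definition is_eigenpair :: "real \<Rightarrow> real \<Rightarrow> real \<Rightarrow> complex \<Rightarrow> (int \<Rightarrow> complex) \<Rightarrow> bool" where
  "is_eigenpair lam \<alpha> \<theta> E u \<longleftrightarrow>
     u \<noteq> (\<lambda>_. 0) \<and>
     (\<lambda>n. (norm (u n))\<^sup>2) summable_on UNIV \<and>
     (\<forall>n. u (n + 1) + u (n - 1) + complex_of_real (lam * sturm_pot \<alpha> \<theta> n) * u n = E * u n)"

definition has_eigenvalue :: "real \<Rightarrow> real \<Rightarrow> real \<Rightarrow> bool" where
  "has_eigenvalue lam \<alpha> \<theta> \<longleftrightarrow> (\<exists>E u. is_eigenpair lam \<alpha> \<theta> E u)"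

end

(*
  Let p_k/q_k be the convergents of alpha and delta_k = q_k alpha - p_k.  Once the partial
  quotients equal 1, q_k and p_k obey the Fibonacci recursion, so the transfer matrices M_k over
  q_k sites satisfy M_(k+3) = M_(k+1) M_(k+2); their traces x_k follow the trace map
  x_(k+4) = x_(k+2) x_(k+3) - x_(k+1), which preserves the Fricke invariant
  x_k^2 + x_(k+1)^2 + x_(k+2)^2 - x_k x_(k+1) x_(k+2).

  The best-approximation property of the convergents controls where the potential fails to be
  q_k-periodic.  It follows that for every large k the potential contains, around one of the
  sites -1, 0, 1, a square of period q_j for some j in {k+1, k+2} and a cube of period q_j for
  some j in {k+1, k+2, k+3}.  By Cayley-Hamilton, a solution vanishing at infinity makes the
  trace of the square at most 1 in modulus and the trace of the cube arbitrarily large, which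
  the conserved Fricke invariant forbids.  An l^2 eigenvector has real energy, so its real or
  imaginary part would be such a solution.
*)

theory Submission
  imports Defs
begin

section \<open>Unimodular matrices and the Fricke invariant\<close>

lemma cayley_hamilton_2:
  fixes A :: "real^2^2"
  shows "A ** A = trace A *\<^sub>R A - det A *\<^sub>R mat 1"
  by (simp add: vec_eq_iff forall_2 matrix_matrix_mult_def sum_2 det_2 trace_def mat_def algebra_simps)

lemma trace_mult_mult_self_2:
  fixes A B :: "real^2^2"
  shows "trace (A ** B ** A) = trace A * trace (A ** B) - det A * trace B"
  by (simp add: trace_def sum_2 matrix_matrix_mult_def det_2 algebra_simps)

lemma unimodular_2_twice:
  fixes A :: "real^2^2"
  assumes "det A = 1"
  shows "A *v (A *v v) + v = trace A *\<^sub>R (A *v v)"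
proof -
  have "A *v (A *v v) = (trace A *\<^sub>R A - mat 1) *v v"
    using cayley_hamilton_2[of A] assms by (simp add: matrix_vector_mul_assoc)
  also have "\<dots> = trace A *\<^sub>R (A *v v) - v"
    by (simp add: vec_eq_iff matrix_vector_mult_def mat_def sum_2 forall_2 algebra_simps)
  finally show ?thesis by simp
qed

lemma unimodular_2_trace_bound:
  fixes A :: "real^2^2"
  assumes "det A = 1"
  shows "\<bar>trace A\<bar> * norm (A *v v) \<le> norm (A *v (A *v v)) + norm v"
  using norm_triangle_ineq[of "A *v (A *v v)" v] unimodular_2_twice[OF assms, of v] by simp

lemma unimodular_2_backward_bound:
  fixes A :: "real^2^2"
  assumes "det A = 1"
  shows "norm v \<le> norm (A *v (A *v v)) + \<bar>trace A\<bar> * norm (A *v v)"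
proof -
  have "v = trace A *\<^sub>R (A *v v) - A *v (A *v v)"
    using unimodular_2_twice[OF assms, of v] by (simp add: algebra_simps)
  then have "norm v \<le> norm (trace A *\<^sub>R (A *v v)) + norm (A *v (A *v v))"
    by (metis norm_triangle_ineq4)
  then show ?thesis by simp
qed

lemma unimodular_2_mult_vector_eq_0:
  fixes A :: "real^2^2"
  assumes "det A = 1" and "A *v v = 0"
  shows "v = 0"
proof -
  have "invertible A" using assms(1) by (simp add: invertible_det_nz)
  then obtain B where "B ** A = mat 1" by (auto simp: invertible_left_inverse)
  then have "v = B *v (A *v v)" by (simp add: matrix_vector_mul_assoc)
  then show "v = 0" using assms(2) by simp
qed

lemma fricke_trace_map:
  fixes a b c :: real
  shows "b\<^sup>2 + c\<^sup>2 + (b * c - a)\<^sup>2 - b * c * (b * c - a) = a\<^sup>2 + b\<^sup>2 + c\<^sup>2 - a * b * c"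
  by (simp add: power2_eq_square algebra_simps)

lemma abs_le_1_mult_le:
  fixes a b c :: real
  assumes "\<bar>a\<bar> \<le> 1"
  shows "a * (b * c) \<le> (b\<^sup>2 + c\<^sup>2) / 2"
proof -
  have "a * (b * c) \<le> \<bar>a\<bar> * \<bar>b * c\<bar>" by (metis abs_ge_self abs_mult)
  also have "\<dots> \<le> \<bar>b * c\<bar>" using assms by (simp add: mult_left_le_one_le)
  also have "\<dots> \<le> (b\<^sup>2 + c\<^sup>2) / 2"
    using sum_squares_bound[of "\<bar>b\<bar>" "\<bar>c\<bar>"] by (simp add: abs_mult power2_eq_square)
  finally show ?thesis .
qed

lemma fricke_bound:
  fixes a b c x :: real
  assumes "\<bar>a\<bar> \<le> 1 \<or> \<bar>b\<bar> \<le> 1" and "x \<in> {a, b, c}"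
  shows "x\<^sup>2 \<le> 2 * (a\<^sup>2 + b\<^sup>2 + c\<^sup>2 - a * b * c)"
proof -
  have linear: "max x (max y z) \<le> 2 * (x + y + z - p)"
    if "0 \<le> x" "0 \<le> y" "0 \<le> z" "p \<le> (y + z) / 2 \<or> p \<le> (x + z) / 2" for x y z p :: real
    using that by (auto simp: max_def)
  have "a * b * c \<le> (b\<^sup>2 + c\<^sup>2) / 2 \<or> a * b * c \<le> (a\<^sup>2 + c\<^sup>2) / 2"
    using assms(1) abs_le_1_mult_le[of a b c] abs_le_1_mult_le[of b a c] by (auto simp: mult_ac)
  then have "max (a\<^sup>2) (max (b\<^sup>2) (c\<^sup>2)) \<le> 2 * (a\<^sup>2 + b\<^sup>2 + c\<^sup>2 - a * b * c)"
    by (intro linear) simp_all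
  then show ?thesis using assms(2) by auto
qed

section \<open>Sturmian potentials and their transfer matrices\<close>

definition sturm_jump :: "real \<Rightarrow> real \<Rightarrow> real" where
  "sturm_jump \<alpha> y = of_int (\<lfloor>y + \<alpha>\<rfloor> - \<lfloor>y\<rfloor>)"

lemma sturm_jump_add_int [simp]: "sturm_jump \<alpha> (y + of_int z) = sturm_jump \<alpha> y"
proof -
  have "y + of_int z + \<alpha> = (y + \<alpha>) + of_int z" by simp
  then show ?thesis unfolding sturm_jump_def by (simp only: floor_add_int) simp
qed

lemma sturm_pot_eq_jump:
  assumes "0 < \<alpha>" and "\<alpha> < 1"
  shows "sturm_pot \<alpha> \<theta> n = sturm_jump \<alpha> (of_int n * \<alpha> + \<theta>)"
proof -
  define z where "z = of_int n * \<alpha> + \<theta>"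
  have "z + \<alpha> = (frac z + \<alpha>) + of_int \<lfloor>z\<rfloor>" by (simp add: frac_def)
  then have jump: "sturm_jump \<alpha> z = of_int \<lfloor>frac z + \<alpha>\<rfloor>"
    unfolding sturm_jump_def by (simp only: floor_add_int) simp
  have "0 \<le> frac z" "frac z < 1" by (simp_all add: frac_lt_1)
  then have "\<lfloor>frac z + \<alpha>\<rfloor> = (if 1 - \<alpha> \<le> frac z then 1 else 0)"
    using assms by (intro floor_unique) auto
  then show ?thesis
    using \<open>frac z < 1\<close> unfolding sturm_pot_def jump z_def[symmetric] by simp
qed

definition transfer_matrix :: "real \<Rightarrow> real \<Rightarrow> real \<Rightarrow> real^2^2" where
  "transfer_matrix E lam s = vector [vector [E - lam * s, -1], vector [1, 0]]"

lemma det_transfer_matrix [simp]: "det (transfer_matrix E lam s) = 1"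
  by (simp add: transfer_matrix_def det_2)

lemma transfer_matrix_mult_vector:
  "transfer_matrix E lam s *v vector [x, y] = vector [(E - lam * s) * x - y, x]"
  by (simp add: transfer_matrix_def vec_eq_iff forall_2 matrix_vector_mult_def sum_2)

definition solution_vector :: "(int \<Rightarrow> real) \<Rightarrow> int \<Rightarrow> real^2" where
  "solution_vector u n = vector [u n, u (n - 1)]"

lemma norm_solution_vector_le: "norm (solution_vector u n) \<le> \<bar>u n\<bar> + \<bar>u (n - 1)\<bar>"
  using norm_le_l1_cart[of "solution_vector u n"] by (simp add: solution_vector_def sum_2)

lemma solution_vector_eq_0_iff: "solution_vector u n = 0 \<longleftrightarrow> u n = 0 \<and> u (n - 1) = 0"
  by (simp add: solution_vector_def vec_eq_iff forall_2)

definition vanishes_at_infinity :: "(int \<Rightarrow> 'a::real_normed_vector) \<Rightarrow> bool" where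
  "vanishes_at_infinity u \<longleftrightarrow> (\<forall>e>0. \<exists>M. \<forall>n. M \<le> \<bar>n\<bar> \<longrightarrow> norm (u n) < e)"

lemma vanishes_at_infinity_solution_vector:
  assumes "vanishes_at_infinity u"
  shows "vanishes_at_infinity (solution_vector u)"
  unfolding vanishes_at_infinity_def
proof (intro allI impI)
  fix e :: real assume "0 < e"
  then obtain M where M: "\<And>n. M \<le> \<bar>n\<bar> \<Longrightarrow> \<bar>u n\<bar> < e / 2"
    using assms unfolding vanishes_at_infinity_def by (metis half_gt_zero real_norm_def)
  have "norm (solution_vector u n) < e" if "M + 1 \<le> \<bar>n\<bar>" for n
    using norm_solution_vector_le[of u n] M[of n] M[of "n - 1"] that by linarith
  then show "\<exists>M. \<forall>n. M \<le> \<bar>n\<bar> \<longrightarrow> norm (solution_vector u n) < e" by blast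
qed

section \<open>Convergents with a Fibonacci tail\<close>

lemma abs_of_int_mult_ge: "j \<noteq> 0 \<Longrightarrow> \<bar>x\<bar> \<le> \<bar>of_int j * (x::real)\<bar>"
proof -
  assume "j \<noteq> 0"
  then have "(1::real) \<le> of_int \<bar>j\<bar>" by linarith
  then show ?thesis by (simp add: abs_mult mult_le_cancel_right1)
qed

lemma abs_add_same_sign: "0 < x * y \<Longrightarrow> \<bar>x + y\<bar> = \<bar>x\<bar> + \<bar>(y::'a::linordered_idom)\<bar>"
  by (auto simp: zero_less_mult_iff)

lemma increments_hit_interval:
  fixes f :: "int \<Rightarrow> real"
  assumes "0 < c" and steps: "\<And>j. c \<le> f (j + 1) - f j \<and> f (j + 1) - f j \<le> L"
  obtains j where "w \<le> f j" and "f j < w + L"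
proof -
  have up: "f j0 + c * real n \<le> f (j0 + int n)" for j0 n
  proof (induction n)
    case (Suc n)
    then show ?case using steps[of "j0 + int n"] by (simp add: algebra_simps add.assoc)
  qed simp
  obtain N :: nat where N: "f 0 - w < real N * c"
    using reals_Archimedean3[OF \<open>0 < c\<close>] by blast
  have start: "f (- int N) < w" using up[of "- int N" N] N by (simp add: algebra_simps)
  obtain M :: nat where M: "w - f (- int N) < real M * c"
    using reals_Archimedean3[OF \<open>0 < c\<close>] by blast
  have "\<not> f (- int N + int M) < w" using up[of "- int N" M] M by (simp add: algebra_simps)
  then obtain n where n: "f (- int N + int n) < w" "\<not> f (- int N + int (Suc n)) < w"
    using ex_least_nat_less[of "\<lambda>i. \<not> f (- int N + int i) < w" M] start by auto
  moreover have "f (- int N + int (Suc n)) \<le> f (- int N + int n) + L"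
  proof -
    have shift: "- int N + int (Suc n) = (- int N + int n) + 1" by simp
    show ?thesis using steps[of "- int N + int n"] unfolding shift by linarith
  qed
  ultimately show ?thesis using that[of "- int N + int (Suc n)"] by simp
qed

lemma decrements_hit_interval:
  fixes f :: "int \<Rightarrow> real"
  assumes "0 < c" and steps: "\<And>j. c \<le> f j - f (j + 1) \<and> f j - f (j + 1) \<le> L"
  obtains j where "w \<le> f j" and "f j < w + L"
proof -
  define g where "g j = f (- j)" for j
  have "c \<le> g (j + 1) - g j \<and> g (j + 1) - g j \<le> L" for j
    using steps[of "- j - 1"] unfolding g_def by simp
  then obtain j where "w \<le> g j" "g j < w + L"
    using increments_hit_interval[OF assms(1)] by metis
  then show ?thesis using that[of "- j"] unfolding g_def by blast
qed

(* q and p stand for the denominators and numerators of the convergents of alpha, whose partial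
   quotients equal 1 from index K + 2 on. *)
locale golden_convergents =
  fixes \<alpha> :: real and q p :: "nat \<Rightarrow> int" and K :: nat
  assumes q_pos: "\<And>k. 1 \<le> q k"
    and q_Suc_mono: "\<And>k. q k \<le> q (Suc k)"
    and convergent_det: "\<And>k. \<bar>q (Suc k) * p k - p (Suc k) * q k\<bar> = 1"
    and delta_alternates:
      "\<And>k. (of_int (q k) * \<alpha> - of_int (p k)) * (of_int (q (Suc k)) * \<alpha> - of_int (p (Suc k))) < 0"
    and abs_delta_decreasing:
      "\<And>k. \<bar>of_int (q (Suc k)) * \<alpha> - of_int (p (Suc k))\<bar> < \<bar>of_int (q k) * \<alpha> - of_int (p k)\<bar>"
    and abs_delta_0: "\<bar>of_int (q 0) * \<alpha> - of_int (p 0)\<bar> < 1"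
    and golden: "\<And>k. K \<le> k \<Longrightarrow> q (k + 2) = q (k + 1) + q k \<and> p (k + 2) = p (k + 1) + p k"
begin

definition delta :: "nat \<Rightarrow> real" where
  "delta k = of_int (q k) * \<alpha> - of_int (p k)"

lemma delta_sign_cases: "delta k > 0 \<and> delta (Suc k) < 0 \<or> delta k < 0 \<and> delta (Suc k) > 0"
  using delta_alternates[of k] unfolding delta_def by (auto simp: mult_less_0_iff)

lemma abs_delta_Suc_less: "\<bar>delta (Suc k)\<bar> < \<bar>delta k\<bar>"
  using abs_delta_decreasing unfolding delta_def by simp

lemma delta_nonzero: "delta k \<noteq> 0"
  using delta_sign_cases[of k] by auto

lemma abs_delta_less_1: "\<bar>delta k\<bar> < 1"
proof (induction k)
  case 0
  then show ?case using abs_delta_0 by (simp add: delta_def)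
next
  case (Suc k)
  then show ?case using abs_delta_Suc_less[of k] by linarith
qed

lemma q_golden: "K \<le> k \<Longrightarrow> q (k + 2) = q (k + 1) + q k"
  using golden by blast

lemma abs_delta_golden: "K \<le> k \<Longrightarrow> \<bar>delta k\<bar> = \<bar>delta (k + 1)\<bar> + \<bar>delta (k + 2)\<bar>"
proof -
  assume "K \<le> k"
  then have "delta (k + 2) = delta (k + 1) + delta k"
    using golden[of k] by (simp add: delta_def algebra_simps)
  then show ?thesis
    using delta_sign_cases[of k] delta_sign_cases[of "Suc k"] by auto
qed

lemma q_mono: "k \<le> k' \<Longrightarrow> q k \<le> q k'"
  using q_Suc_mono by (rule lift_Suc_mono_le)

lemma q_ge: "K + n \<le> k \<Longrightarrow> int n \<le> q k"
proof -
  have tail: "int n + 1 \<le> q (K + n + 1) \<and> int n + 2 \<le> q (K + n + 2)" for n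
  proof (induction n)
    case 0
    then show ?case using q_golden[of K] q_pos[of K] q_pos[of "K + 1"] by simp
  next
    case (Suc n)
    then show ?case using q_golden[of "K + n + 1"] q_pos[of "K + n + 1"] by simp
  qed
  assume "K + n \<le> k"
  then show ?thesis
  proof (cases n)
    case (Suc m)
    then show ?thesis using tail[of m] q_mono[of "K + m + 1" k] \<open>K + n \<le> k\<close> by simp
  qed (use q_pos[of k] in simp)
qed

lemma convergent_coordinates:
  obtains i j where "m = i * q (Suc k) + j * q k" and "r = i * p (Suc k) + j * p k"
proof
  define D where "D = q (Suc k) * p k - p (Suc k) * q k"
  have D2: "D * D = 1"
    using convergent_det[of k] abs_mult_self_eq[of D] unfolding D_def by simp
  have "D * (m * p k - r * q k) * q (Suc k) + D * (r * q (Suc k) - m * p (Suc k)) * q k = D * D * m"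
    unfolding D_def by (simp add: algebra_simps)
  then show "m = D * (m * p k - r * q k) * q (Suc k) + D * (r * q (Suc k) - m * p (Suc k)) * q k"
    using D2 by simp
  have "D * (m * p k - r * q k) * p (Suc k) + D * (r * q (Suc k) - m * p (Suc k)) * p k = D * D * r"
    unfolding D_def by (simp add: algebra_simps)
  then show "r = D * (m * p k - r * q k) * p (Suc k) + D * (r * q (Suc k) - m * p (Suc k)) * p k"
    using D2 by simp
qed

lemma small_convergent_coordinates:
  assumes "K \<le> k" and "0 < \<bar>i * q (Suc k) + j * q k\<bar>" and "\<bar>i * q (Suc k) + j * q k\<bar> < q (k + 2)"
  shows "i = 0 \<or> j = 0 \<and> (i = 1 \<or> i = -1) \<or> i * j < 0"
proof -
  have qk: "1 \<le> q k" "q k \<le> q (Suc k)" and q2: "q (k + 2) = q (Suc k) + q k"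
    using q_pos[of k] q_Suc_mono[of k] q_golden[OF assms(1)] by auto
  have "\<not> 0 < i * j"
  proof
    assume "0 < i * j"
    then have "0 < (i * q (Suc k)) * (j * q k)"
      using qk zero_less_mult_iff[of "i * j" "q (Suc k) * q k"] by (simp add: mult_ac)
    then have "\<bar>i * q (Suc k) + j * q k\<bar> = \<bar>i\<bar> * q (Suc k) + \<bar>j\<bar> * q k"
      using qk by (simp add: abs_add_same_sign abs_mult)
    moreover have "1 * q (Suc k) \<le> \<bar>i\<bar> * q (Suc k)" "1 * q k \<le> \<bar>j\<bar> * q k"
      using \<open>0 < i * j\<close> qk by (intro mult_right_mono; auto simp: zero_less_mult_iff)+
    ultimately show False using assms(3) q2 by simp
  qed
  moreover have "i = 1 \<or> i = -1" if "j = 0" "i \<noteq> 0"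
  proof -
    have "\<bar>i\<bar> * q (Suc k) < q (Suc k) + q k" using that assms(3) q2 qk by (simp add: abs_mult)
    then have "\<bar>i\<bar> * q (Suc k) < 2 * q (Suc k)" using qk by linarith
    then have "\<bar>i\<bar> < 2" using qk by (simp add: mult_less_cancel_right)
    then show ?thesis using that by auto
  qed
  ultimately show ?thesis by (metis linorder_neqE_linordered_idom mult_eq_0_iff)
qed

lemma best_approximation:
  assumes "K \<le> k" and "0 < \<bar>m\<bar>" and "\<bar>m\<bar> < q (k + 2)"
  shows "\<bar>delta k\<bar> \<le> \<bar>of_int m * \<alpha> - of_int r\<bar>
    \<or> m = q (k + 1) \<and> of_int m * \<alpha> - of_int r = delta (k + 1)
    \<or> m = - q (k + 1) \<and> of_int m * \<alpha> - of_int r = - delta (k + 1)"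
proof -
  obtain i j where m: "m = i * q (Suc k) + j * q k" and r: "r = i * p (Suc k) + j * p k"
    by (rule convergent_coordinates)
  have val: "of_int m * \<alpha> - of_int r = of_int i * delta (Suc k) + of_int j * delta k"
    unfolding m r delta_def by (simp add: algebra_simps)
  from small_convergent_coordinates[OF assms(1), of i j] assms(2,3)
  consider "i = 0" | "j = 0" "i = 1 \<or> i = -1" | "i * j < 0" unfolding m by blast
  then show ?thesis
  proof cases
    case 1
    then have "j \<noteq> 0" using m assms(2) by auto
    then show ?thesis using 1 val abs_of_int_mult_ge[of j "delta k"] by auto
  next
    case 2
    then show ?thesis using m r by (auto simp: delta_def)
  next
    case 3
    then have "0 < (of_int i * delta (Suc k)) * (of_int j * delta k)" "j \<noteq> 0"
      using delta_sign_cases[of k] by (auto simp: zero_less_mult_iff mult_less_0_iff simp flip: of_int_mult)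
    then have "\<bar>delta k\<bar> \<le> \<bar>of_int m * \<alpha> - of_int r\<bar>"
      using abs_of_int_mult_ge[of j "delta k"] abs_ge_zero[of "of_int i * delta (Suc k)"]
      unfolding val by (simp add: abs_add_same_sign)
    then show ?thesis by blast
  qed
qed

abbreviation jump :: "real \<Rightarrow> real" where
  "jump \<equiv> sturm_jump \<alpha>"

definition ref_interval :: "nat \<Rightarrow> real set" where
  "ref_interval k = {min (\<alpha> - delta (Suc k)) (\<alpha> - delta k) ..< max (\<alpha> - delta (Suc k)) (\<alpha> - delta k)}"

lemma ref_interval_iff:
  "y \<in> ref_interval k \<longleftrightarrow>
    (if 0 < delta k then delta (Suc k) < \<alpha> - y \<and> \<alpha> - y \<le> delta k
     else delta k < \<alpha> - y \<and> \<alpha> - y \<le> delta (Suc k))"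
  using delta_sign_cases[of k] unfolding ref_interval_def by auto

(* The points (j q_k mod q_(k+1)) alpha of the orbit, shifted by integers so that consecutive
   ones differ by delta_k or delta_k - delta_(k+1); both steps have the sign of delta_k. *)
definition orbit_walk :: "nat \<Rightarrow> int \<Rightarrow> real" where
  "orbit_walk k j = of_int j * delta k - of_int ((j * q k) div q (Suc k)) * delta (Suc k)"

lemma orbit_walk_eq:
  "orbit_walk k j = of_int ((j * q k) mod q (Suc k)) * \<alpha> - of_int (j * p k - (j * q k) div q (Suc k) * p (Suc k))"
proof -
  have "real_of_int j * of_int (q k)
      = of_int ((j * q k) mod q (Suc k)) + of_int (q (Suc k)) * of_int ((j * q k) div q (Suc k))"
    by (metis of_int_add of_int_mult mult_div_mod_eq add.commute)
  then have "\<alpha> * (of_int j * of_int (q k))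
      = \<alpha> * (of_int ((j * q k) mod q (Suc k)) + of_int (q (Suc k)) * of_int ((j * q k) div q (Suc k)))"
    by simp
  then show ?thesis unfolding orbit_walk_def delta_def by (simp add: algebra_simps)
qed

lemma orbit_walk_step:
  "orbit_walk k (j + 1) - orbit_walk k j = delta k \<or> orbit_walk k (j + 1) - orbit_walk k j = delta k - delta (Suc k)"
proof -
  define Q where "Q = q (Suc k)"
  have Q: "0 < Q" "0 \<le> q k" "q k \<le> Q"
    using q_pos[of "Suc k"] q_pos[of k] q_Suc_mono[of k] unfolding Q_def by auto
  have "(j * q k) div Q \<le> (j * q k + q k) div Q" "(j * q k + q k) div Q \<le> (j * q k + Q) div Q"
    using Q by (intro zdiv_mono1; simp)+
  moreover have "(j * q k + Q) div Q = (j * q k) div Q + 1" using Q by simp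
  ultimately have "(j * q k + q k) div Q = (j * q k) div Q \<or> (j * q k + q k) div Q = (j * q k) div Q + 1"
    by linarith
  moreover have "(j + 1) * q k = j * q k + q k" by (simp add: algebra_simps)
  ultimately show ?thesis unfolding orbit_walk_def Q_def by (auto simp: algebra_simps)
qed

lemma orbit_hits_ref_interval:
  obtains n m where "0 \<le> n" "n < q (Suc k)" "y + of_int n * \<alpha> - of_int m \<in> ref_interval k"
proof -
  define w where "w = min (\<alpha> - delta (Suc k)) (\<alpha> - delta k) - y"
  define L where "L = \<bar>delta k\<bar> + \<bar>delta (Suc k)\<bar>"
  have "0 < \<bar>delta k\<bar>" using delta_nonzero[of k] by simp
  obtain j where j: "w \<le> orbit_walk k j" "orbit_walk k j < w + L"
  proof (cases "delta k > 0")
    case True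
    then have "\<bar>delta k\<bar> \<le> orbit_walk k (j + 1) - orbit_walk k j \<and> orbit_walk k (j + 1) - orbit_walk k j \<le> L" for j
      using orbit_walk_step[of k j] delta_sign_cases[of k] unfolding L_def by auto
    then show ?thesis using increments_hit_interval[OF \<open>0 < \<bar>delta k\<bar>\<close>] that by metis
  next
    case False
    then have "\<bar>delta k\<bar> \<le> orbit_walk k j - orbit_walk k (j + 1) \<and> orbit_walk k j - orbit_walk k (j + 1) \<le> L" for j
      using orbit_walk_step[of k j] delta_sign_cases[of k] unfolding L_def by auto
    then show ?thesis using decrements_hit_interval[OF \<open>0 < \<bar>delta k\<bar>\<close>] that by metis
  qed
  have "ref_interval k = {w + y ..< w + y + L}"
    using delta_sign_cases[of k] unfolding ref_interval_def w_def L_def by auto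
  moreover have "0 \<le> (j * q k) mod q (Suc k)" "(j * q k) mod q (Suc k) < q (Suc k)"
    using q_pos[of "Suc k"] by simp_all
  ultimately show ?thesis
    using that[of "(j * q k) mod q (Suc k)" "j * p k - (j * q k) div q (Suc k) * p (Suc k)"] j
    unfolding orbit_walk_eq by simp
qed

lemma floor_orbit_eq:
  assumes "K + 2 \<le> k" and y: "y \<in> ref_interval k" and "0 \<le> m" and "m \<le> q (Suc k)"
  shows "\<lfloor>y + of_int m * \<alpha>\<rfloor> = \<lfloor>\<alpha> + of_int m * \<alpha>\<rfloor>"
proof (rule ccontr)
  assume ne: "\<lfloor>y + of_int m * \<alpha>\<rfloor> \<noteq> \<lfloor>\<alpha> + of_int m * \<alpha>\<rfloor>"
  obtain r where seg: "0 \<le> of_int (m + 1) * \<alpha> - of_int r \<and> of_int (m + 1) * \<alpha> - of_int r < \<alpha> - y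
    \<or> \<alpha> - y \<le> of_int (m + 1) * \<alpha> - of_int r \<and> of_int (m + 1) * \<alpha> - of_int r < 0"
  proof (cases "y < \<alpha>")
    case True
    then have "\<lfloor>y + of_int m * \<alpha>\<rfloor> < \<lfloor>\<alpha> + of_int m * \<alpha>\<rfloor>"
      using ne floor_mono[of "y + of_int m * \<alpha>" "\<alpha> + of_int m * \<alpha>"] by simp
    then have "y + of_int m * \<alpha> < of_int \<lfloor>\<alpha> + of_int m * \<alpha>\<rfloor>" by (meson floor_less_iff)
    then show ?thesis
      using that[of "\<lfloor>\<alpha> + of_int m * \<alpha>\<rfloor>"] of_int_floor_le[of "\<alpha> + of_int m * \<alpha>"]
      by (simp add: algebra_simps)
  next
    case False
    then have "\<lfloor>\<alpha> + of_int m * \<alpha>\<rfloor> < \<lfloor>y + of_int m * \<alpha>\<rfloor>"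
      using ne floor_mono[of "\<alpha> + of_int m * \<alpha>" "y + of_int m * \<alpha>"] by simp
    then have "\<alpha> + of_int m * \<alpha> < of_int \<lfloor>y + of_int m * \<alpha>\<rfloor>" by (meson floor_less_iff)
    then show ?thesis
      using that[of "\<lfloor>y + of_int m * \<alpha>\<rfloor>"] of_int_floor_le[of "y + of_int m * \<alpha>"]
      by (simp add: algebra_simps)
  qed
  have "2 \<le> q k" using q_ge[of 2 k] assms(1) by simp
  then have "0 < \<bar>m + 1\<bar>" "\<bar>m + 1\<bar> < q (k + 2)"
    using assms q_golden[of k] by auto
  from best_approximation[OF _ this, of r] assms(1)
  have "\<bar>delta k\<bar> \<le> \<bar>of_int (m + 1) * \<alpha> - of_int r\<bar> \<or> of_int (m + 1) * \<alpha> - of_int r = delta (Suc k)"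
    using assms(3) q_pos[of "Suc k"] by auto
  then show False
    using seg y abs_delta_Suc_less[of k] delta_sign_cases[of k] unfolding ref_interval_iff
    by (auto split: if_splits)
qed

lemma jump_orbit_eq:
  assumes "K + 2 \<le> k" and "y \<in> ref_interval k" and "0 \<le> i" and "i < q (Suc k)"
  shows "jump (y + of_int i * \<alpha>) = jump (\<alpha> + of_int i * \<alpha>)"
proof -
  have shift: "y + of_int i * \<alpha> + \<alpha> = y + of_int (i + 1) * \<alpha>"
    "\<alpha> + of_int i * \<alpha> + \<alpha> = \<alpha> + of_int (i + 1) * \<alpha>"
    by (simp_all add: algebra_simps)
  have "\<lfloor>y + of_int i * \<alpha>\<rfloor> = \<lfloor>\<alpha> + of_int i * \<alpha>\<rfloor>"
    "\<lfloor>y + of_int (i + 1) * \<alpha>\<rfloor> = \<lfloor>\<alpha> + of_int (i + 1) * \<alpha>\<rfloor>"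
    using floor_orbit_eq[OF assms(1,2), of i] floor_orbit_eq[OF assms(1,2), of "i + 1"] assms(3,4)
    by simp_all
  then show ?thesis unfolding sturm_jump_def shift by simp
qed

end

section \<open>The transfer-matrix cocycle and the trace map\<close>

locale sturm_cocycle = golden_convergents +
  fixes \<theta> E lam :: real
begin

fun cocycle :: "real \<Rightarrow> nat \<Rightarrow> real^2^2" where
  "cocycle y 0 = mat 1"
| "cocycle y (Suc l) = transfer_matrix E lam (jump (y + real l * \<alpha>)) ** cocycle y l"

lemma cocycle_add: "cocycle y (l1 + l2) = cocycle (y + real l1 * \<alpha>) l2 ** cocycle y l1"
proof (induction l2)
  case (Suc l2)
  have "y + real (l1 + l2) * \<alpha> = y + real l1 * \<alpha> + real l2 * \<alpha>" by (simp add: algebra_simps)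
  then show ?case by (simp only: add_Suc_right cocycle.simps Suc.IH matrix_mul_assoc)
qed simp

lemma cocycle_add_int [simp]: "cocycle (y + of_int z) l = cocycle y l"
proof (induction l)
  case (Suc l)
  have "y + of_int z + real l * \<alpha> = (y + real l * \<alpha>) + of_int z" by simp
  then have "jump (y + of_int z + real l * \<alpha>) = jump (y + real l * \<alpha>)"
    by (simp only: sturm_jump_add_int)
  then show ?case using Suc by simp
qed simp

lemma det_cocycle [simp]: "det (cocycle y l) = 1"
  by (induction l) (simp_all add: det_mul)

lemma cocycle_cong:
  "(\<And>i. i < l \<Longrightarrow> jump (y + real i * \<alpha>) = jump (y' + real i * \<alpha>)) \<Longrightarrow> cocycle y l = cocycle y' l"
  by (induction l) auto

lemma trace_cocycle_shift:
  assumes "jump (y + real l * \<alpha>) = jump y"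
  shows "trace (cocycle (y + \<alpha>) l) = trace (cocycle y l)"
proof (cases l)
  case (Suc l')
  have shift: "y + \<alpha> + real l' * \<alpha> = y + real l * \<alpha>" using Suc by (simp add: algebra_simps)
  have "jump (y + \<alpha> + real l' * \<alpha>) = jump y" unfolding shift by (rule assms)
  then have "cocycle (y + \<alpha>) (Suc l') = transfer_matrix E lam (jump y) ** cocycle (y + \<alpha>) l'"
    by simp
  moreover have "cocycle y (Suc l') = cocycle (y + \<alpha>) l' ** transfer_matrix E lam (jump y)"
    using cocycle_add[of y 1 l'] by simp
  ultimately show ?thesis unfolding Suc by (metis trace_mul_sym)
qed simp

definition period_matrix :: "nat \<Rightarrow> real^2^2" where
  "period_matrix k = cocycle \<alpha> (nat (q k))"

definition period_trace :: "nat \<Rightarrow> real" where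
  "period_trace k = trace (period_matrix k)"

lemma cocycle_ref_interval:
  assumes "K + 2 \<le> k" and "y \<in> ref_interval k"
  shows "cocycle y (nat (q (Suc k))) = period_matrix (Suc k)"
  unfolding period_matrix_def
proof (rule cocycle_cong)
  fix i assume "i < nat (q (Suc k))"
  then show "jump (y + real i * \<alpha>) = jump (\<alpha> + real i * \<alpha>)"
    using jump_orbit_eq[OF assms, of "int i"] by simp
qed

lemma period_matrix_golden:
  assumes "K + 2 \<le> k"
  shows "period_matrix (k + 3) = period_matrix (k + 1) ** period_matrix (k + 2)"
proof -
  define y where "y = \<alpha> + delta (k + 2)"
  have "nat (q (k + 3)) = nat (q (k + 2)) + nat (q (k + 1))"
    using q_golden[of "k + 1"] assms q_pos[of "k + 1"] q_pos[of "k + 2"] by (simp add: numeral_eq_Suc)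
  then have "period_matrix (k + 3)
      = cocycle (\<alpha> + real (nat (q (k + 2))) * \<alpha>) (nat (q (k + 1))) ** period_matrix (k + 2)"
    unfolding period_matrix_def by (simp only: cocycle_add)
  also have "\<alpha> + real (nat (q (k + 2))) * \<alpha> = y + of_int (p (k + 2))"
    using q_pos[of "k + 2"] unfolding y_def delta_def by simp
  also have "cocycle (y + of_int (p (k + 2))) (nat (q (k + 1))) = period_matrix (k + 1)"
  proof -
    have "y \<in> ref_interval k"
      using delta_sign_cases[of k] delta_sign_cases[of "Suc k"] abs_delta_Suc_less[of "Suc k"]
      unfolding ref_interval_iff y_def by (auto simp: numeral_eq_Suc)
    then show ?thesis using cocycle_ref_interval[OF assms] by (simp only: cocycle_add_int Suc_eq_plus1)
  qed
  finally show ?thesis .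
qed

lemma det_period_matrix [simp]: "det (period_matrix k) = 1"
  by (simp add: period_matrix_def)

lemma period_trace_golden:
  assumes "K + 2 \<le> k"
  shows "period_trace (k + 4) = period_trace (k + 2) * period_trace (k + 3) - period_trace (k + 1)"
proof -
  define A B where "A = period_matrix (k + 2)" and "B = period_matrix (k + 1)"
  have BA: "B ** A = period_matrix (k + 3)"
    using period_matrix_golden[OF assms] unfolding A_def B_def by simp
  have "period_matrix (k + 4) = A ** (B ** A)"
    using period_matrix_golden[of "k + 1"] assms BA unfolding A_def by (simp add: numeral_eq_Suc)
  then have "period_trace (k + 4) = trace A * trace (A ** B) - trace B"
    using trace_mult_mult_self_2[of A B] unfolding period_trace_def A_def
    by (simp only: matrix_mul_assoc det_period_matrix mult_1)
  also have "trace (A ** B) = period_trace (k + 3)"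
    unfolding period_trace_def BA[symmetric] by (rule trace_mul_sym)
  finally show ?thesis unfolding period_trace_def A_def B_def .
qed

definition fricke_invariant :: "nat \<Rightarrow> real" where
  "fricke_invariant k = (period_trace k)\<^sup>2 + (period_trace (k + 1))\<^sup>2 + (period_trace (k + 2))\<^sup>2
     - period_trace k * period_trace (k + 1) * period_trace (k + 2)"

lemma fricke_invariant_const:
  assumes "K + 3 \<le> k"
  shows "fricke_invariant k = fricke_invariant (K + 3)"
  using assms
proof (induction k rule: dec_induct)
  case (step n)
  then have trace_map:
    "period_trace (Suc n + 2) = period_trace (Suc n) * period_trace (Suc n + 1) - period_trace n"
    using period_trace_golden[of "n - 1"] by (simp add: numeral_eq_Suc)
  have "fricke_invariant (Suc n) = (period_trace n)\<^sup>2 + (period_trace (Suc n))\<^sup>2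
      + (period_trace (Suc n + 1))\<^sup>2 - period_trace n * period_trace (Suc n) * period_trace (Suc n + 1)"
    unfolding fricke_invariant_def trace_map fricke_trace_map ..
  also have "\<dots> = fricke_invariant n"
    by (simp add: fricke_invariant_def)
  finally show ?case using step by simp
qed simp

section \<open>Local repetitions of the potential\<close>

(* Sites where shifting the orbit by q_k may move n alpha + theta across an integer. *)
definition defect :: "nat \<Rightarrow> int \<Rightarrow> bool" where
  "defect k n \<longleftrightarrow> \<lfloor>of_int n * \<alpha> + \<theta> + delta k\<rfloor> \<noteq> \<lfloor>of_int n * \<alpha> + \<theta>\<rfloor>"

definition defect_free :: "nat \<Rightarrow> int \<Rightarrow> int \<Rightarrow> bool" where
  "defect_free k a b \<longleftrightarrow> (\<forall>n. a \<le> n \<and> n \<le> b \<longrightarrow> \<not> defect k n)"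

lemma jump_periodic_of_defect_free:
  assumes "defect_free k a b" and "a \<le> n" and "n < b"
  shows "jump (of_int (n + q k) * \<alpha> + \<theta>) = jump (of_int n * \<alpha> + \<theta>)"
proof -
  define z where "z = of_int n * \<alpha> + \<theta>"
  have "\<not> defect k n" "\<not> defect k (n + 1)" using assms unfolding defect_free_def by auto
  moreover have "of_int (n + 1) * \<alpha> + \<theta> = z + \<alpha>" unfolding z_def by (simp add: algebra_simps)
  ultimately have "\<lfloor>z + delta k\<rfloor> = \<lfloor>z\<rfloor>" "\<lfloor>z + delta k + \<alpha>\<rfloor> = \<lfloor>z + \<alpha>\<rfloor>"
    unfolding defect_def z_def by (simp_all add: algebra_simps)
  then have "jump (z + delta k) = jump z" unfolding sturm_jump_def by simp
  moreover have "of_int (n + q k) * \<alpha> + \<theta> = (z + delta k) + of_int (p k)"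
    unfolding z_def delta_def by (simp add: algebra_simps)
  ultimately show ?thesis unfolding z_def by (simp only: sturm_jump_add_int)
qed

definition defect_window :: "nat \<Rightarrow> real set" where
  "defect_window k = {- delta k ..< 0} \<union> {0 ..< - delta k}"

lemma defect_near_integer:
  assumes "defect k n"
  obtains r where "of_int n * \<alpha> + \<theta> - of_int r \<in> defect_window k"
proof (cases "0 < delta k")
  case True
  define z where "z = of_int n * \<alpha> + \<theta>"
  have "\<lfloor>z\<rfloor> < \<lfloor>z + delta k\<rfloor>"
    using assms True floor_mono[of z "z + delta k"] unfolding defect_def z_def by simp
  then have "z < of_int \<lfloor>z + delta k\<rfloor>" by (meson floor_less_iff)
  then show ?thesis using that[of "\<lfloor>z + delta k\<rfloor>"] of_int_floor_le[of "z + delta k"]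
    unfolding z_def defect_window_def by auto
next
  case False
  define z where "z = of_int n * \<alpha> + \<theta>"
  have "\<lfloor>z + delta k\<rfloor> < \<lfloor>z\<rfloor>"
    using assms False floor_mono[of "z + delta k" z] unfolding defect_def z_def by simp
  then have "z + delta k < of_int \<lfloor>z\<rfloor>" by (meson floor_less_iff)
  then show ?thesis using that[of "\<lfloor>z\<rfloor>"] of_int_floor_le[of z]
    unfolding z_def defect_window_def by auto
qed

lemma defects_separated:
  assumes "K \<le> k" and "defect (Suc k) a" and "defect (Suc k) b" and "\<bar>a - b\<bar> < q (k + 2)"
  shows "a = b"
proof (rule ccontr)
  assume "a \<noteq> b"
  obtain r s where r: "of_int a * \<alpha> + \<theta> - of_int r \<in> defect_window (Suc k)"
    and s: "of_int b * \<alpha> + \<theta> - of_int s \<in> defect_window (Suc k)"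
    using defect_near_integer assms(2,3) by metis
  have "of_int (b - a) * \<alpha> - of_int (s - r)
      = (of_int b * \<alpha> + \<theta> - of_int s) - (of_int a * \<alpha> + \<theta> - of_int r)"
    by (simp add: algebra_simps)
  then have close: "\<bar>of_int (b - a) * \<alpha> - of_int (s - r)\<bar> < \<bar>delta (Suc k)\<bar>"
    using r s unfolding defect_window_def by (auto simp: abs_if)
  have "0 < \<bar>b - a\<bar>" "\<bar>b - a\<bar> < q (k + 2)" using \<open>a \<noteq> b\<close> assms(4) by auto
  from best_approximation[OF assms(1) this, of "s - r"] show False
    using close abs_delta_Suc_less[of k] by auto
qed

lemma defect_successor:
  assumes "K \<le> k" and "defect (Suc k) t" and "defect (k + 2) t'" and "\<bar>t' - t\<bar> < q (k + 2)"
  shows "t' = t + q (Suc k)"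
proof -
  obtain r r' where r: "of_int t * \<alpha> + \<theta> - of_int r \<in> defect_window (Suc k)"
    and r': "of_int t' * \<alpha> + \<theta> - of_int r' \<in> defect_window (k + 2)"
    using defect_near_integer assms(2,3) by metis
  define v where "v = of_int (t' - t) * \<alpha> - of_int (r' - r)"
  have "v = (of_int t' * \<alpha> + \<theta> - of_int r') - (of_int t * \<alpha> + \<theta> - of_int r)"
    unfolding v_def by (simp add: algebra_simps)
  then have v: "0 < delta (Suc k) \<and> 0 < v \<and> v < \<bar>delta k\<bar> \<or> delta (Suc k) < 0 \<and> v < 0 \<and> - v < \<bar>delta k\<bar>"
    using r r' delta_sign_cases[of "Suc k"] abs_delta_golden[OF assms(1)]
    unfolding defect_window_def by (auto simp: numeral_eq_Suc)
  show ?thesis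
  proof (cases "t' = t")
    case True
    then have "\<bar>of_int (r' - r)\<bar> < (1::real)" "of_int (r' - r) \<noteq> (0::real)"
      using v abs_delta_less_1[of k] unfolding v_def by auto
    then have "\<bar>r' - r\<bar> < 1" "r' - r \<noteq> 0"
      by (metis of_int_abs of_int_1 of_int_less_iff, simp)
    then show ?thesis by linarith
  next
    case False
    then have "0 < \<bar>t' - t\<bar>" "\<bar>t' - t\<bar> < q (k + 2)" using assms(4) by auto
    from best_approximation[OF assms(1) this, of "r' - r"] show ?thesis
      using v unfolding v_def by auto
  qed
qed

lemma defect_left_of_origin:
  assumes "K + 3 \<le> k" and "\<not> (\<exists>c\<in>{-1, 0, 1}. defect_free (Suc k) (c - q (Suc k)) c)"
  shows "\<exists>t. defect (Suc k) t \<and> 1 - q (Suc k) \<le> t \<and> t \<le> -1"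
proof -
  have "\<not> defect_free (Suc k) (-1 - q (Suc k)) (-1)" "\<not> defect_free (Suc k) (- q (Suc k)) 0"
    "\<not> defect_free (Suc k) (1 - q (Suc k)) 1"
    using assms(2) by auto
  then obtain a b c where
    a: "defect (Suc k) a" "-1 - q (Suc k) \<le> a" "a \<le> -1" and
    b: "defect (Suc k) b" "- q (Suc k) \<le> b" "b \<le> 0" and
    c: "defect (Suc k) c" "1 - q (Suc k) \<le> c" "c \<le> 1"
    unfolding defect_free_def by blast
  have "3 \<le> q k" "q (k + 2) = q (Suc k) + q k" using q_ge[of 3 k] q_golden[of k] assms(1) by auto
  then have "a = b" "a = c"
    using defects_separated[of k a b] defects_separated[of k a c] a b c assms(1) by auto
  then show ?thesis using a b c by auto
qed

lemma defect_right_of_origin: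
  assumes "K + 3 \<le> k" and "\<not> (\<exists>c\<in>{-1, 0, 1}. defect_free (Suc k) c (c + q (Suc k)))"
  shows "\<exists>t. defect (Suc k) t \<and> 1 \<le> t \<and> t \<le> q (Suc k) - 1"
proof -
  have "\<not> defect_free (Suc k) (-1) (-1 + q (Suc k))" "\<not> defect_free (Suc k) 0 (q (Suc k))"
    "\<not> defect_free (Suc k) 1 (1 + q (Suc k))"
    using assms(2) by auto
  then obtain a b c where
    a: "defect (Suc k) a" "-1 \<le> a" "a \<le> -1 + q (Suc k)" and
    b: "defect (Suc k) b" "0 \<le> b" "b \<le> q (Suc k)" and
    c: "defect (Suc k) c" "1 \<le> c" "c \<le> 1 + q (Suc k)"
    unfolding defect_free_def by blast
  have "3 \<le> q k" "q (k + 2) = q (Suc k) + q k" using q_ge[of 3 k] q_golden[of k] assms(1) by auto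
  then have "a = b" "a = c"
    using defects_separated[of k a b] defects_separated[of k a c] a b c assms(1) by auto
  then show ?thesis using a b c by auto
qed

lemma square_near_origin:
  assumes "K + 3 \<le> k"
  shows "\<exists>j\<in>{k + 1, k + 2}. \<exists>c\<in>{-1, 0, 1}. defect_free j (c - q j) c"
proof (rule ccontr)
  assume "\<not> ?thesis"
  then have "\<not> (\<exists>c\<in>{-1, 0, 1}. defect_free (Suc k) (c - q (Suc k)) c)"
    "\<not> (\<exists>c\<in>{-1, 0, 1}. defect_free (Suc (Suc k)) (c - q (Suc (Suc k))) c)"
    by (auto simp: numeral_eq_Suc)
  then obtain t t' where
    t: "defect (Suc k) t" "1 - q (Suc k) \<le> t" "t \<le> -1" and
    t': "defect (Suc (Suc k)) t'" "1 - q (Suc (Suc k)) \<le> t'" "t' \<le> -1"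
    using defect_left_of_origin[of k] defect_left_of_origin[of "Suc k"] assms by force
  have "q (Suc k) \<le> q (Suc (Suc k))" using q_Suc_mono[of "Suc k"] by simp
  then have "\<bar>t' - t\<bar> < q (Suc (Suc k))" using t t' by (simp add: abs_less_iff)
  then have "t' = t + q (Suc k)"
    using defect_successor[of k t t'] t t' assms by (auto simp: numeral_eq_Suc)
  then show False using t t' by simp
qed

lemma cube_near_origin:
  assumes "K + 3 \<le> k"
  shows "\<exists>j\<in>{k + 1, k + 2, k + 3}. \<exists>c\<in>{-1, 0, 1}. defect_free j c (c + q j)"
proof (rule ccontr)
  assume "\<not> ?thesis"
  then have "\<not> (\<exists>c\<in>{-1, 0, 1}. defect_free (Suc k) c (c + q (Suc k)))"
    "\<not> (\<exists>c\<in>{-1, 0, 1}. defect_free (Suc (Suc k)) c (c + q (Suc (Suc k))))"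
    "\<not> (\<exists>c\<in>{-1, 0, 1}. defect_free (Suc (Suc (Suc k))) c (c + q (Suc (Suc (Suc k)))))"
    by (auto simp: numeral_eq_Suc)
  then obtain t1 t2 t3 where
    t1: "defect (Suc k) t1" "1 \<le> t1" "t1 \<le> q (Suc k) - 1" and
    t2: "defect (Suc (Suc k)) t2" "1 \<le> t2" "t2 \<le> q (Suc (Suc k)) - 1" and
    t3: "defect (Suc (Suc (Suc k))) t3" "1 \<le> t3" "t3 \<le> q (Suc (Suc (Suc k))) - 1"
    using defect_right_of_origin[of k] defect_right_of_origin[of "Suc k"]
      defect_right_of_origin[of "Suc (Suc k)"] assms by force
  have q: "q (Suc k) \<le> q (Suc (Suc k))" "q (Suc (Suc k)) \<le> q (Suc (Suc (Suc k)))"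
    "q (Suc (Suc (Suc k))) = q (Suc (Suc k)) + q (Suc k)"
    using q_Suc_mono q_pos[of "Suc k"] q_golden[of "Suc k"] assms by (auto simp: numeral_eq_Suc)
  have "\<bar>t2 - t1\<bar> < q (Suc (Suc k))" "\<bar>t3 - t2\<bar> < q (Suc (Suc (Suc k)))"
    using t1 t2 t3 q by (simp_all add: abs_less_iff)
  then have "t2 = t1 + q (Suc k)" "t3 = t2 + q (Suc (Suc k))"
    using defect_successor[of k t1 t2] defect_successor[of "Suc k" t2 t3] t1 t2 t3 assms
    by (auto simp: numeral_eq_Suc)
  then show False using t1 t3 q by simp
qed

section \<open>Gordon's argument\<close>

definition is_solution :: "(int \<Rightarrow> real) \<Rightarrow> bool" where
  "is_solution u \<longleftrightarrow> (\<forall>n. u (n + 1) + u (n - 1) + lam * jump (of_int n * \<alpha> + \<theta>) * u n = E * u n)"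

lemma solution_vector_cocycle:
  assumes "is_solution u"
  shows "solution_vector u (a + int l) = cocycle (of_int a * \<alpha> + \<theta>) l *v solution_vector u a"
proof (induction l)
  case 0
  then show ?case by simp
next
  case (Suc l)
  define s where "s = jump (of_int (a + int l) * \<alpha> + \<theta>)"
  have "of_int a * \<alpha> + \<theta> + real l * \<alpha> = of_int (a + int l) * \<alpha> + \<theta>" by (simp add: algebra_simps)
  then have "cocycle (of_int a * \<alpha> + \<theta>) (Suc l) *v solution_vector u a
      = transfer_matrix E lam s *v solution_vector u (a + int l)"
    unfolding s_def Suc.IH by (simp only: cocycle.simps matrix_vector_mul_assoc)
  also have "\<dots> = solution_vector u (a + int (Suc l))"
  proof -
    have "u (a + int l + 1) + u (a + int l - 1) + lam * s * u (a + int l) = E * u (a + int l)"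
      using assms unfolding is_solution_def s_def by blast
    then have step: "u (a + int l + 1) = (E - lam * s) * u (a + int l) - u (a + int l - 1)"
      by (simp add: algebra_simps)
    have "a + int (Suc l) = a + int l + 1" "a + int l + 1 - 1 = a + int l" by simp_all
    then show ?thesis
      unfolding solution_vector_def transfer_matrix_mult_vector by (simp only: step)
  qed
  finally show ?case ..
qed

lemma solution_eq_0_of_vector_eq_0:
  assumes "is_solution u" and "solution_vector u c = 0"
  shows "u n = 0"
proof (cases "c \<le> n")
  case True
  have "solution_vector u (c + int (nat (n - c))) = 0"
    using solution_vector_cocycle[OF assms(1), of c "nat (n - c)"] assms(2) by simp
  then show ?thesis using True by (simp add: solution_vector_eq_0_iff)
next
  case False
  then have "cocycle (of_int n * \<alpha> + \<theta>) (nat (c - n)) *v solution_vector u n = 0"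
    using solution_vector_cocycle[OF assms(1), of n "nat (c - n)"] assms(2) by simp
  then have "solution_vector u n = 0" by (rule unimodular_2_mult_vector_eq_0[OF det_cocycle])
  then show ?thesis by (simp add: solution_vector_eq_0_iff)
qed

lemma trace_periodic_window:
  assumes "K + 2 \<le> k"
    and periodic: "\<And>i. 0 \<le> i \<Longrightarrow> i < q (Suc k) \<Longrightarrow>
      jump (y + of_int (i + q (Suc k)) * \<alpha>) = jump (y + of_int i * \<alpha>)"
  shows "trace (cocycle y (nat (q (Suc k)))) = period_trace (Suc k)"
proof -
  define Q where "Q = nat (q (Suc k))"
  have Q: "int Q = q (Suc k)" using q_pos[of "Suc k"] unfolding Q_def by simp
  then have QR: "real Q = of_int (q (Suc k))" by (metis of_int_of_nat_eq)
  \<comment> \<open>Cyclic shifts keep the trace, and some shift starts in the reference interval.\<close>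
  have shift: "trace (cocycle (y + real j * \<alpha>) Q) = trace (cocycle y Q)" if "j \<le> Q" for j
    using that
  proof (induction j)
    case (Suc j)
    have "jump (y + of_int (int j + q (Suc k)) * \<alpha>) = jump (y + of_int (int j) * \<alpha>)"
      using Suc.prems Q by (intro periodic) auto
    moreover have "y + real j * \<alpha> + real Q * \<alpha> = y + of_int (int j + q (Suc k)) * \<alpha>"
      using QR by (simp add: algebra_simps)
    ultimately have "jump (y + real j * \<alpha> + real Q * \<alpha>) = jump (y + real j * \<alpha>)"
      by (metis of_int_of_nat_eq)
    then have "trace (cocycle (y + real j * \<alpha> + \<alpha>) Q) = trace (cocycle (y + real j * \<alpha>) Q)"
      by (rule trace_cocycle_shift)
    moreover have "y + real (Suc j) * \<alpha> = y + real j * \<alpha> + \<alpha>" by (simp add: algebra_simps)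
    ultimately show ?case using Suc by (metis Suc_leD)
  qed simp
  obtain n m where n: "0 \<le> n" "n < q (Suc k)" and "y + of_int n * \<alpha> - of_int m \<in> ref_interval k"
    by (rule orbit_hits_ref_interval)
  then have "period_matrix (Suc k) = cocycle (y + of_int n * \<alpha> - of_int m) Q"
    using cocycle_ref_interval[OF assms(1)] unfolding Q_def by simp
  also have "\<dots> = cocycle (y + of_int n * \<alpha> - of_int m + of_int m) Q"
    by (rule cocycle_add_int[symmetric])
  also have "y + of_int n * \<alpha> - of_int m + of_int m = y + real (nat n) * \<alpha>"
    using n by simp
  finally show ?thesis
    using shift[of "nat n"] n Q unfolding period_trace_def Q_def by simp
qed

lemma cocycle_of_defect_free:
  assumes "K + 3 \<le> j" and "defect_free j a (a + q j)"
  shows "cocycle (of_int (a + q j) * \<alpha> + \<theta>) (nat (q j)) = cocycle (of_int a * \<alpha> + \<theta>) (nat (q j))"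
    and "trace (cocycle (of_int a * \<alpha> + \<theta>) (nat (q j))) = period_trace j"
proof -
  have periodic: "jump (of_int (n + q j) * \<alpha> + \<theta>) = jump (of_int n * \<alpha> + \<theta>)"
    if "a \<le> n" "n < a + q j" for n
    using jump_periodic_of_defect_free[OF assms(2) that] .
  show "cocycle (of_int (a + q j) * \<alpha> + \<theta>) (nat (q j)) = cocycle (of_int a * \<alpha> + \<theta>) (nat (q j))"
  proof (rule cocycle_cong)
    fix i assume "i < nat (q j)"
    then show "jump (of_int (a + q j) * \<alpha> + \<theta> + real i * \<alpha>) = jump (of_int a * \<alpha> + \<theta> + real i * \<alpha>)"
      using periodic[of "a + int i"] by (simp add: algebra_simps)
  qed
  obtain k where k: "j = Suc k" "K + 2 \<le> k" using assms(1) by (cases j) auto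
  show "trace (cocycle (of_int a * \<alpha> + \<theta>) (nat (q j))) = period_trace j"
    unfolding k(1)
  proof (rule trace_periodic_window[OF k(2)])
    fix i assume "0 \<le> i" "i < q (Suc k)"
    then show "jump (of_int a * \<alpha> + \<theta> + of_int (i + q (Suc k)) * \<alpha>) = jump (of_int a * \<alpha> + \<theta> + of_int i * \<alpha>)"
      using periodic[of "a + i"] k(1) by (simp add: algebra_simps)
  qed
qed

lemma trace_bound_of_square:
  assumes "is_solution u" and "K + 3 \<le> j" and "defect_free j (c - q j) c"
  shows "\<bar>period_trace j\<bar> * norm (solution_vector u c)
    \<le> norm (solution_vector u (c + q j)) + norm (solution_vector u (c - q j))"
proof -
  define A where "A = cocycle (of_int (c - q j) * \<alpha> + \<theta>) (nat (q j))"
  have Q: "int (nat (q j)) = q j" using q_pos[of j] by simp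
  have "defect_free j (c - q j) (c - q j + q j)" using assms(3) by simp
  note window = cocycle_of_defect_free[OF assms(2) this]
  have "solution_vector u c = A *v solution_vector u (c - q j)"
    using solution_vector_cocycle[OF assms(1), of "c - q j" "nat (q j)"] Q unfolding A_def by simp
  moreover have "solution_vector u (c + q j) = A *v solution_vector u c"
    using solution_vector_cocycle[OF assms(1), of c "nat (q j)"] Q window(1) unfolding A_def by simp
  ultimately show ?thesis
    using unimodular_2_trace_bound[of A "solution_vector u (c - q j)"] window(2)
    unfolding A_def by simp
qed

lemma trace_bound_of_cube:
  assumes "is_solution u" and "K + 3 \<le> j" and "defect_free j c (c + q j)"
  shows "norm (solution_vector u c)
    \<le> norm (solution_vector u (c + 2 * q j)) + \<bar>period_trace j\<bar> * norm (solution_vector u (c + q j))"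
proof -
  define A where "A = cocycle (of_int c * \<alpha> + \<theta>) (nat (q j))"
  have Q: "int (nat (q j)) = q j" using q_pos[of j] by simp
  note window = cocycle_of_defect_free[OF assms(2,3)]
  have "solution_vector u (c + q j) = A *v solution_vector u c"
    using solution_vector_cocycle[OF assms(1), of c "nat (q j)"] Q unfolding A_def by simp
  moreover have "solution_vector u (c + 2 * q j) = A *v solution_vector u (c + q j)"
    using solution_vector_cocycle[OF assms(1), of "c + q j" "nat (q j)"] Q window(1)
    unfolding A_def by (simp add: algebra_simps)
  ultimately show ?thesis
    using unimodular_2_backward_bound[of A "solution_vector u c"] window(2)
    unfolding A_def by simp
qed

lemma far_from_origin:
  assumes "K + 3 + nat M \<le> k" and "k < j" and "c \<in> {-1, 0, 1}"
  shows "M \<le> \<bar>c + q j\<bar>" "M \<le> \<bar>c - q j\<bar>" "M \<le> \<bar>c + 2 * q j\<bar>"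
proof -
  have "int (nat M + 3) \<le> q j" using q_ge[of "nat M + 3" j] assms(1,2) by simp
  then have "M + 3 \<le> q j" by linarith
  then show "M \<le> \<bar>c + q j\<bar>" "M \<le> \<bar>c - q j\<bar>" "M \<le> \<bar>c + 2 * q j\<bar>" using assms(3) by auto
qed

lemma small_trace_of_decay:
  assumes "is_solution u" and "K + 3 + nat M \<le> k"
    and far: "\<And>n. M \<le> \<bar>n\<bar> \<Longrightarrow> norm (solution_vector u n) < \<epsilon>"
    and near: "\<And>c. c \<in> {-1, 0, 1} \<Longrightarrow> \<mu> \<le> norm (solution_vector u c)" and "2 * \<epsilon> \<le> \<mu>"
  shows "\<bar>period_trace (k + 1)\<bar> \<le> 1 \<or> \<bar>period_trace (k + 2)\<bar> \<le> 1"
proof -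
  have "K + 3 \<le> k" using assms(2) by simp
  then obtain j c where j: "j \<in> {k + 1, k + 2}" and c: "c \<in> {-1, 0, 1}"
    and window: "defect_free j (c - q j) c"
    using square_near_origin by blast
  have "K + 3 \<le> j" using j assms(2) by auto
  then have "\<bar>period_trace j\<bar> * norm (solution_vector u c)
      \<le> norm (solution_vector u (c + q j)) + norm (solution_vector u (c - q j))"
    using trace_bound_of_square[OF assms(1) _ window] by blast
  also have "\<dots> < 2 * \<epsilon>"
  proof -
    have "M \<le> \<bar>c + q j\<bar>" "M \<le> \<bar>c - q j\<bar>" using far_from_origin[OF assms(2) _ c, of j] j by auto
    then show ?thesis using far[of "c + q j"] far[of "c - q j"] by simp
  qed
  finally have "\<bar>period_trace j\<bar> * norm (solution_vector u c) < norm (solution_vector u c)"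
    using near[OF c] \<open>2 * \<epsilon> \<le> \<mu>\<close> by linarith
  moreover have "1 * norm (solution_vector u c) \<le> \<bar>period_trace j\<bar> * norm (solution_vector u c)"
    if "1 \<le> \<bar>period_trace j\<bar>" using that by (intro mult_right_mono) auto
  ultimately have "\<bar>period_trace j\<bar> \<le> 1" by force
  then show ?thesis using j by auto
qed

lemma large_trace_of_decay:
  assumes "is_solution u" and "K + 3 + nat M \<le> k" and "0 < \<epsilon>"
    and far: "\<And>n. M \<le> \<bar>n\<bar> \<Longrightarrow> norm (solution_vector u n) < \<epsilon>"
    and near: "\<And>c. c \<in> {-1, 0, 1} \<Longrightarrow> \<mu> \<le> norm (solution_vector u c)"
  shows "\<exists>j\<in>{k + 1, k + 2, k + 3}. \<mu> / \<epsilon> - 1 < \<bar>period_trace j\<bar>"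
proof -
  have "K + 3 \<le> k" using assms(2) by simp
  then obtain j c where j: "j \<in> {k + 1, k + 2, k + 3}" and c: "c \<in> {-1, 0, 1}"
    and window: "defect_free j c (c + q j)"
    using cube_near_origin by blast
  have "K + 3 \<le> j" using j assms(2) by auto
  then have "\<mu> \<le> norm (solution_vector u (c + 2 * q j)) + \<bar>period_trace j\<bar> * norm (solution_vector u (c + q j))"
    using trace_bound_of_cube[OF assms(1) _ window] near[OF c] by fastforce
  also have "\<dots> < \<epsilon> + \<bar>period_trace j\<bar> * \<epsilon>"
  proof -
    have "M \<le> \<bar>c + q j\<bar>" "M \<le> \<bar>c + 2 * q j\<bar>" using far_from_origin[OF assms(2) _ c, of j] j by auto
    then have "norm (solution_vector u (c + 2 * q j)) < \<epsilon>" "norm (solution_vector u (c + q j)) \<le> \<epsilon>"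
      using far[of "c + q j"] far[of "c + 2 * q j"] by simp_all
    then show ?thesis by (simp add: add_less_le_mono mult_left_mono)
  qed
  finally have "\<mu> / \<epsilon> < 1 + \<bar>period_trace j\<bar>"
    using \<open>0 < \<epsilon>\<close> by (simp add: divide_less_eq algebra_simps)
  then show ?thesis using j by auto
qed

lemma no_decaying_solution:
  assumes "is_solution u" and "u \<noteq> (\<lambda>_. 0)" and "vanishes_at_infinity u"
  shows False
proof -
  define \<mu> where "\<mu> = Min ((\<lambda>c. norm (solution_vector u c)) ` {-1, 0, 1})"
  have "solution_vector u c \<noteq> 0" for c
    using solution_eq_0_of_vector_eq_0[OF assms(1)] assms(2) by blast
  then have \<mu>: "0 < \<mu>" "\<And>c. c \<in> {-1, 0, 1} \<Longrightarrow> \<mu> \<le> norm (solution_vector u c)"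
    unfolding \<mu>_def by auto
  \<comment> \<open>With this choice a square forces a trace of modulus at most 1 and a cube a trace
    exceeding T, which the Fricke invariant rules out.\<close>
  define T where "T = 3 + 2 * \<bar>fricke_invariant (K + 3)\<bar>"
  define \<epsilon> where "\<epsilon> = \<mu> / (T + 1)"
  have T: "3 \<le> T" and \<epsilon>: "0 < \<epsilon>" "2 * \<epsilon> \<le> \<mu>" "\<mu> / \<epsilon> - 1 = T"
    unfolding \<epsilon>_def T_def using \<mu>(1) by (auto simp: field_simps)
  obtain M where far: "\<And>n. M \<le> \<bar>n\<bar> \<Longrightarrow> norm (solution_vector u n) < \<epsilon>"
    using vanishes_at_infinity_solution_vector[OF assms(3)] \<epsilon>(1) unfolding vanishes_at_infinity_def by blast
  define k where "k = K + 3 + nat M"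
  then have k: "K + 3 + nat M \<le> k" by simp
  have small: "\<bar>period_trace (k + 1)\<bar> \<le> 1 \<or> \<bar>period_trace (k + 2)\<bar> \<le> 1"
    using small_trace_of_decay[OF assms(1) k far \<mu>(2) \<epsilon>(2)] .
  obtain j where j: "j \<in> {k + 1, k + 2, k + 3}" and large: "T < \<bar>period_trace j\<bar>"
    using large_trace_of_decay[OF assms(1) k \<epsilon>(1) far \<mu>(2)] \<epsilon>(3) by auto
  have "period_trace j \<in> {period_trace (k + 1), period_trace (k + 2), period_trace (k + 3)}"
    using j by auto
  moreover have "fricke_invariant (k + 1) = (period_trace (k + 1))\<^sup>2 + (period_trace (k + 2))\<^sup>2
      + (period_trace (k + 3))\<^sup>2 - period_trace (k + 1) * period_trace (k + 2) * period_trace (k + 3)"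
    by (simp add: fricke_invariant_def numeral_eq_Suc)
  ultimately have "(period_trace j)\<^sup>2 \<le> 2 * fricke_invariant (k + 1)"
    using fricke_bound[OF small] by simp
  also have "fricke_invariant (k + 1) = fricke_invariant (K + 3)"
    unfolding k_def by (rule fricke_invariant_const) simp
  finally have "(period_trace j)\<^sup>2 \<le> 2 * fricke_invariant (K + 3)" .
  moreover have "T * T < (period_trace j)\<^sup>2"
    using large T mult_strict_mono[of T "\<bar>period_trace j\<bar>" T "\<bar>period_trace j\<bar>"]
    by (simp add: power2_eq_square)
  moreover have "T \<le> T * T" using T by simp
  ultimately show False
    using abs_ge_self[of "fricke_invariant (K + 3)"] unfolding T_def by linarith
qed

lemma solution_of_complex:
  assumes "\<And>n. u (n + 1) + u (n - 1) + of_real (lam * jump (of_int n * \<alpha> + \<theta>)) * u n = of_real E * u n"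
  shows "is_solution (\<lambda>n. Re (u n))" and "is_solution (\<lambda>n. Im (u n))"
  unfolding is_solution_def
  using arg_cong[where f = Re, OF assms] arg_cong[where f = Im, OF assms] by simp_all

end

section \<open>Eigenvectors have real energy\<close>

lemma vanishes_at_infinity_dominated:
  assumes "vanishes_at_infinity u" and "\<And>n. norm (v n) \<le> norm (u n)"
  shows "vanishes_at_infinity v"
  using assms unfolding vanishes_at_infinity_def by (meson le_less_trans)

lemma l2_vanishes_at_infinity:
  fixes u :: "int \<Rightarrow> 'a::real_normed_vector"
  assumes "(\<lambda>n. (norm (u n))\<^sup>2) summable_on UNIV"
  shows "vanishes_at_infinity u"
  unfolding vanishes_at_infinity_def
proof (intro allI impI)
  fix e :: real assume "0 < e"
  have tail: "\<exists>N. \<forall>n\<ge>N. norm (u (h n)) < e" if "inj h" for h :: "nat \<Rightarrow> int"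
  proof -
    have "(\<lambda>n. (norm (u n))\<^sup>2) summable_on range h"
      using summable_on_subset_banach[OF assms] by simp
    then have "(\<lambda>n. (norm (u (h n)))\<^sup>2) summable_on UNIV"
      using summable_on_reindex[of h UNIV "\<lambda>n. (norm (u n))\<^sup>2"] that by (simp add: o_def)
    then have "summable (\<lambda>n. (norm (u (h n)))\<^sup>2)"
      by (simp add: summable_on_UNIV_nonneg_real_iff)
    then have "(\<lambda>n. sqrt ((norm (u (h n)))\<^sup>2)) \<longlonglongrightarrow> sqrt 0"
      by (intro tendsto_real_sqrt summable_LIMSEQ_zero)
    then have "(\<lambda>n. norm (u (h n))) \<longlonglongrightarrow> 0" by simp
    then have "eventually (\<lambda>n. norm (u (h n)) < e) sequentially"
      using \<open>0 < e\<close> by (rule order_tendstoD(2))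
    then show ?thesis by (simp add: eventually_sequentially)
  qed
  have "inj (\<lambda>n::nat. int n)" "inj (\<lambda>n::nat. - int n)" by (simp_all add: inj_on_def)
  then obtain N1 N2 where N1: "\<forall>n\<ge>N1. norm (u (int n)) < e" and N2: "\<forall>n\<ge>N2. norm (u (- int n)) < e"
    using tail by blast
  have "norm (u n) < e" if "int (max N1 N2) \<le> \<bar>n\<bar>" for n
  proof (cases "0 \<le> n")
    case True
    then have "N1 \<le> nat n" using that by (simp add: le_nat_iff)
    then show ?thesis using N1 True by force
  next
    case False
    then have "N2 \<le> nat (- n)" using that by (simp add: le_nat_iff)
    then show ?thesis using N2 False by force
  qed
  then show "\<exists>M. \<forall>n. M \<le> \<bar>n\<bar> \<longrightarrow> norm (u n) < e" by blast
qed

lemma sum_symmetric_telescope: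
  fixes g :: "int \<Rightarrow> 'a::ab_group_add"
  shows "(\<Sum>n\<in>{- int N..int N}. g n - g (n - 1)) = g (int N) - g (- int N - 1)"
proof (induction N)
  case (Suc N)
  have "{- int (Suc N)..int (Suc N)} = insert (- int N - 1) (insert (int N + 1) {- int N..int N})"
    by auto
  then have "(\<Sum>n\<in>{- int (Suc N)..int (Suc N)}. g n - g (n - 1))
      = (g (- int N - 1) - g (- int N - 1 - 1)) + (g (int N + 1) - g (int N))
        + (\<Sum>n\<in>{- int N..int N}. g n - g (n - 1))"
    by (simp add: algebra_simps)
  then show ?case using Suc by (simp add: algebra_simps)
qed simp

lemma eigenvector_flux:
  fixes u :: "int \<Rightarrow> complex" and v :: real
  assumes "u (n + 1) + u (n - 1) + of_real v * u n = E * u n"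
  shows "Im E * (norm (u n))\<^sup>2 = Im (cnj (u n) * u (n + 1)) - Im (cnj (u (n - 1)) * u n)"
proof -
  have "u (n + 1) + u (n - 1) = (E - of_real v) * u n"
    using assms by (simp add: algebra_simps)
  then have "cnj (u n) * (u (n + 1) + u (n - 1)) = (E - of_real v) * (u n * cnj (u n))"
    by (simp only: mult_ac)
  then have "cnj (u n) * (u (n + 1) + u (n - 1)) = (E - of_real v) * of_real ((norm (u n))\<^sup>2)"
    by (simp only: complex_norm_square)
  then have "Im (cnj (u n) * (u (n + 1) + u (n - 1))) = Im E * (norm (u n))\<^sup>2"
    by (simp del: of_real_power)
  moreover have "cnj (u n) * u (n - 1) = cnj (cnj (u (n - 1)) * u n)" by simp
  then have "Im (cnj (u n) * (u (n + 1) + u (n - 1))) = Im (cnj (u n) * u (n + 1)) - Im (cnj (u (n - 1)) * u n)"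
    by (simp only: distrib_left plus_complex.sel cnj.sel)
  ultimately show ?thesis by simp
qed

lemma eigenvector_mass_flux:
  fixes u :: "int \<Rightarrow> complex" and V :: "int \<Rightarrow> real"
  assumes "\<And>n. u (n + 1) + u (n - 1) + of_real (V n) * u n = E * u n"
  shows "Im E * (\<Sum>n\<in>{- int N..int N}. (norm (u n))\<^sup>2)
    = Im (cnj (u (int N)) * u (int N + 1)) - Im (cnj (u (- int N - 1)) * u (- int N))"
  using sum_symmetric_telescope[of "\<lambda>n. Im (cnj (u n) * u (n + 1))" N] eigenvector_flux[OF assms]
  by (simp add: sum_distrib_left)

lemma eigenvalue_real:
  fixes u :: "int \<Rightarrow> complex" and V :: "int \<Rightarrow> real"
  assumes eq: "\<And>n. u (n + 1) + u (n - 1) + of_real (V n) * u n = E * u n"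
    and "u \<noteq> (\<lambda>_. 0)" and "vanishes_at_infinity u"
  shows "Im E = 0"
proof (rule ccontr)
  assume ne: "Im E \<noteq> 0"
  obtain n0 where "u n0 \<noteq> 0" using assms(2) by blast
  define c where "c = (norm (u n0))\<^sup>2"
  have "0 < c" unfolding c_def using \<open>u n0 \<noteq> 0\<close> by simp
  define e where "e = min 1 (\<bar>Im E\<bar> * c / 4)"
  have e: "0 < e" "e \<le> 1" "e \<le> \<bar>Im E\<bar> * c / 4" unfolding e_def using ne \<open>0 < c\<close> by auto
  obtain M where M: "\<And>n. M \<le> \<bar>n\<bar> \<Longrightarrow> norm (u n) < e"
    using assms(3) e(1) unfolding vanishes_at_infinity_def by blast
  have boundary: "\<bar>Im (cnj (u n) * u (n + 1))\<bar> \<le> e * e" if "M \<le> \<bar>n\<bar>" "M \<le> \<bar>n + 1\<bar>" for n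
  proof -
    have "\<bar>Im (cnj (u n) * u (n + 1))\<bar> \<le> norm (u n) * norm (u (n + 1))"
      using abs_Im_le_cmod[of "cnj (u n) * u (n + 1)"] by (simp add: norm_mult)
    also have "\<dots> \<le> e * e" using M[OF that(1)] M[OF that(2)] e(1) by (intro mult_mono) auto
    finally show ?thesis .
  qed
  define N where "N = nat (max M \<bar>n0\<bar>)"
  define S where "S = (\<Sum>n\<in>{- int N..int N}. (norm (u n))\<^sup>2)"
  have "0 \<le> S" unfolding S_def by (intro sum_nonneg) simp
  then have "\<bar>Im E\<bar> * S = \<bar>Im (cnj (u (int N)) * u (int N + 1)) - Im (cnj (u (- int N - 1)) * u (- int N))\<bar>"
    using eigenvector_mass_flux[OF eq, of N] unfolding S_def by (metis abs_mult abs_of_nonneg)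
  also have "\<dots> \<le> 2 * (e * e)"
  proof -
    have "M \<le> int N" unfolding N_def by auto
    then have "\<bar>Im (cnj (u (int N)) * u (int N + 1))\<bar> \<le> e * e"
      "\<bar>Im (cnj (u (- int N - 1)) * u (- int N))\<bar> \<le> e * e"
      using boundary[of "int N"] boundary[of "- int N - 1"] by simp_all
    then show ?thesis
      using abs_triangle_ineq4[of "Im (cnj (u (int N)) * u (int N + 1))" "Im (cnj (u (- int N - 1)) * u (- int N))"]
      by linarith
  qed
  finally have "\<bar>Im E\<bar> * S \<le> 2 * (e * e)" .
  moreover have "\<bar>Im E\<bar> * c \<le> \<bar>Im E\<bar> * S"
    unfolding c_def S_def N_def by (intro mult_left_mono member_le_sum) (auto simp: abs_le_iff)
  moreover have "e * e \<le> e" using e by (simp add: mult_left_le)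
  moreover have "0 < \<bar>Im E\<bar> * c" using ne \<open>0 < c\<close> by simp
  ultimately show False using e(3) by linarith
qed

section \<open>Continued fraction convergents\<close>

lemma frac_not_in_Rats: "y \<notin> \<rat> \<Longrightarrow> frac y \<notin> \<rat>"
proof
  assume "y \<notin> \<rat>" "frac y \<in> \<rat>"
  then have "frac y + of_int \<lfloor>y\<rfloor> \<in> \<rat>" by simp
  then show False using \<open>y \<notin> \<rat>\<close> by (simp add: frac_def)
qed

lemma gauss_iter_irrational:
  assumes "\<alpha> \<notin> \<rat>" and "0 < \<alpha>" and "\<alpha> < 1"
  shows "0 < gauss_iter \<alpha> i \<and> gauss_iter \<alpha> i < 1 \<and> gauss_iter \<alpha> i \<notin> \<rat>"
proof (induction i)
  case (Suc i)
  have "inverse (gauss_iter \<alpha> i) \<notin> \<rat>" using Suc Rats_inverse by force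
  then have irrational: "frac (1 / gauss_iter \<alpha> i) \<notin> \<rat>"
    by (simp add: frac_not_in_Rats inverse_eq_divide)
  then have "frac (1 / gauss_iter \<alpha> i) \<noteq> 0" using Rats_0 by metis
  then have "0 < frac (1 / gauss_iter \<alpha> i)" using frac_ge_0[of "1 / gauss_iter \<alpha> i"] by linarith
  then show ?case using irrational frac_lt_1 by simp
qed (use assms in simp)

lemma cf_coeff_ge_1:
  assumes "\<alpha> \<notin> \<rat>" and "0 < \<alpha>" and "\<alpha> < 1"
  shows "1 \<le> cf_coeff \<alpha> n"
proof -
  have "0 < gauss_iter \<alpha> (n - 1)" "gauss_iter \<alpha> (n - 1) < 1"
    using gauss_iter_irrational[OF assms] by auto
  then have "1 < 1 / gauss_iter \<alpha> (n - 1)" by simp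
  then show ?thesis unfolding cf_coeff_def by linarith
qed

lemma cf_coeff_eventually_1:
  assumes "\<alpha> \<notin> \<rat>" and "0 < \<alpha>" and "\<alpha> < 1"
    and "limsup (\<lambda>n. ereal (real_of_int (cf_coeff \<alpha> n))) = 1"
  obtains N where "\<And>n. N \<le> n \<Longrightarrow> cf_coeff \<alpha> n = 1"
proof -
  have "eventually (\<lambda>n. ereal (real_of_int (cf_coeff \<alpha> n)) < 2) sequentially"
    by (rule Limsup_lessD) (use assms(4) in simp)
  then obtain N where N: "\<And>n. N \<le> n \<Longrightarrow> real_of_int (cf_coeff \<alpha> n) < 2"
    unfolding eventually_sequentially by auto
  have "cf_coeff \<alpha> n = 1" if "N \<le> n" for n
    using N[OF that] cf_coeff_ge_1[OF assms(1-3), of n] by linarith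
  then show ?thesis using that by blast
qed

fun cf_denom :: "real \<Rightarrow> nat \<Rightarrow> int" where
  "cf_denom \<alpha> 0 = 1"
| "cf_denom \<alpha> (Suc 0) = cf_coeff \<alpha> 1"
| "cf_denom \<alpha> (Suc (Suc k)) = cf_coeff \<alpha> (k + 2) * cf_denom \<alpha> (Suc k) + cf_denom \<alpha> k"

fun cf_numer :: "real \<Rightarrow> nat \<Rightarrow> int" where
  "cf_numer \<alpha> 0 = 0"
| "cf_numer \<alpha> (Suc 0) = 1"
| "cf_numer \<alpha> (Suc (Suc k)) = cf_coeff \<alpha> (k + 2) * cf_numer \<alpha> (Suc k) + cf_numer \<alpha> k"

definition cf_error :: "real \<Rightarrow> nat \<Rightarrow> real" where
  "cf_error \<alpha> k = of_int (cf_denom \<alpha> k) * \<alpha> - of_int (cf_numer \<alpha> k)"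

lemma gauss_iter_Suc_eq: "gauss_iter \<alpha> (Suc i) = 1 / gauss_iter \<alpha> i - of_int (cf_coeff \<alpha> (Suc i))"
  by (simp add: cf_coeff_def frac_def)

lemma cf_error_Suc:
  assumes "\<alpha> \<notin> \<rat>" and "0 < \<alpha>" and "\<alpha> < 1"
  shows "cf_error \<alpha> (Suc k) = - gauss_iter \<alpha> (Suc k) * cf_error \<alpha> k"
proof (induction k)
  case 0
  have "gauss_iter \<alpha> 1 = 1 / \<alpha> - of_int (cf_coeff \<alpha> 1)" using gauss_iter_Suc_eq[of \<alpha> 0] by simp
  then show ?case unfolding cf_error_def using assms by (simp add: field_simps)
next
  case (Suc k)
  have x: "gauss_iter \<alpha> (Suc k) \<noteq> 0" using gauss_iter_irrational[OF assms, of "Suc k"] by auto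
  have rec: "cf_error \<alpha> (Suc (Suc k)) = of_int (cf_coeff \<alpha> (k + 2)) * cf_error \<alpha> (Suc k) + cf_error \<alpha> k"
    unfolding cf_error_def by (simp add: algebra_simps)
  have prev: "cf_error \<alpha> k = - cf_error \<alpha> (Suc k) / gauss_iter \<alpha> (Suc k)" using Suc x by (simp add: field_simps)
  have gauss_next: "gauss_iter \<alpha> (Suc (Suc k)) = 1 / gauss_iter \<alpha> (Suc k) - of_int (cf_coeff \<alpha> (k + 2))"
    using gauss_iter_Suc_eq[of \<alpha> "Suc k"] by (simp add: numeral_eq_Suc)
  show ?case unfolding rec prev gauss_next using x by (simp add: field_simps)
qed

lemma cf_convergent_det: "cf_denom \<alpha> (Suc k) * cf_numer \<alpha> k - cf_numer \<alpha> (Suc k) * cf_denom \<alpha> k = (-1) ^ Suc k"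
  by (induction k) (simp_all add: algebra_simps)

lemma cf_denom_pos_mono:
  assumes "\<alpha> \<notin> \<rat>" and "0 < \<alpha>" and "\<alpha> < 1"
  shows "1 \<le> cf_denom \<alpha> k \<and> cf_denom \<alpha> k \<le> cf_denom \<alpha> (Suc k)"
proof (induction k)
  case 0
  then show ?case using cf_coeff_ge_1[OF assms, of 1] by simp
next
  case (Suc k)
  have "1 * cf_denom \<alpha> (Suc k) \<le> cf_coeff \<alpha> (k + 2) * cf_denom \<alpha> (Suc k)"
    using Suc cf_coeff_ge_1[OF assms] by (intro mult_right_mono) auto
  moreover have "cf_denom \<alpha> (Suc (Suc k)) = cf_coeff \<alpha> (k + 2) * cf_denom \<alpha> (Suc k) + cf_denom \<alpha> k"
    by simp
  ultimately show ?case using Suc by linarith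
qed

lemma cf_error_nonzero:
  assumes "\<alpha> \<notin> \<rat>" and "0 < \<alpha>" and "\<alpha> < 1"
  shows "cf_error \<alpha> k \<noteq> 0"
proof (induction k)
  case (Suc k)
  then show ?case using cf_error_Suc[OF assms, of k] gauss_iter_irrational[OF assms, of "Suc k"] by simp
qed (use assms in \<open>simp add: cf_error_def\<close>)

lemma golden_convergents_cf:
  assumes "\<alpha> \<notin> \<rat>" and "0 < \<alpha>" and "\<alpha> < 1" and golden: "\<And>n. N \<le> n \<Longrightarrow> cf_coeff \<alpha> n = 1"
  shows "golden_convergents \<alpha> (cf_denom \<alpha>) (cf_numer \<alpha>) N"
proof
  fix k
  show "1 \<le> cf_denom \<alpha> k" "cf_denom \<alpha> k \<le> cf_denom \<alpha> (Suc k)"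
    using cf_denom_pos_mono[OF assms(1-3)] by auto
  show "\<bar>cf_denom \<alpha> (Suc k) * cf_numer \<alpha> k - cf_numer \<alpha> (Suc k) * cf_denom \<alpha> k\<bar> = 1"
    unfolding cf_convergent_det by simp
  have x: "0 < gauss_iter \<alpha> (Suc k)" "gauss_iter \<alpha> (Suc k) < 1"
    using gauss_iter_irrational[OF assms(1-3), of "Suc k"] by blast+
  have e: "cf_error \<alpha> k \<noteq> 0" by (rule cf_error_nonzero[OF assms(1-3)])
  have "cf_error \<alpha> k * cf_error \<alpha> (Suc k) = - gauss_iter \<alpha> (Suc k) * (cf_error \<alpha> k)\<^sup>2"
    unfolding cf_error_Suc[OF assms(1-3)] by (simp add: power2_eq_square)
  then show "(of_int (cf_denom \<alpha> k) * \<alpha> - of_int (cf_numer \<alpha> k))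
      * (of_int (cf_denom \<alpha> (Suc k)) * \<alpha> - of_int (cf_numer \<alpha> (Suc k))) < 0"
    using x e unfolding cf_error_def by simp
  have "\<bar>cf_error \<alpha> (Suc k)\<bar> = gauss_iter \<alpha> (Suc k) * \<bar>cf_error \<alpha> k\<bar>"
    unfolding cf_error_Suc[OF assms(1-3)] using x by (simp add: abs_mult)
  then show "\<bar>of_int (cf_denom \<alpha> (Suc k)) * \<alpha> - of_int (cf_numer \<alpha> (Suc k))\<bar>
      < \<bar>of_int (cf_denom \<alpha> k) * \<alpha> - of_int (cf_numer \<alpha> k)\<bar>"
    using x e unfolding cf_error_def by simp
next
  show "\<bar>of_int (cf_denom \<alpha> 0) * \<alpha> - of_int (cf_numer \<alpha> 0)\<bar> < 1" using assms by simp
next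
  fix k assume "N \<le> k"
  then show "cf_denom \<alpha> (k + 2) = cf_denom \<alpha> (k + 1) + cf_denom \<alpha> k \<and>
    cf_numer \<alpha> (k + 2) = cf_numer \<alpha> (k + 1) + cf_numer \<alpha> k"
    using golden[of "k + 2"] by (simp add: numeral_eq_Suc)
qed

theorem proposition4p2:
  fixes \<alpha> \<theta> lam :: real
  assumes "0 < \<alpha>" and "\<alpha> < 1" and "\<alpha> \<notin> \<rat>"
    and "limsup (\<lambda>n. ereal (real_of_int (cf_coeff \<alpha> n))) = 1"
    and "0 \<le> \<theta>" and "\<theta> < 1"
    and "lam \<noteq> 0"
  shows "\<not> has_eigenvalue lam \<alpha> \<theta>"
proof
  assume "has_eigenvalue lam \<alpha> \<theta>"
  then obtain E u where
    eq: "\<And>n. u (n + 1) + u (n - 1) + complex_of_real (lam * sturm_pot \<alpha> \<theta> n) * u n = E * u n"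
    and nonzero: "u \<noteq> (\<lambda>_. 0)" and decay: "vanishes_at_infinity u"
    unfolding has_eigenvalue_def is_eigenpair_def using l2_vanishes_at_infinity by blast
  have "E = of_real (Re E)"
    using eigenvalue_real[OF eq nonzero decay] by (simp add: complex_eq_iff)
  obtain N where "\<And>n. N \<le> n \<Longrightarrow> cf_coeff \<alpha> n = 1"
    using cf_coeff_eventually_1[OF assms(3,1,2,4)] by blast
  then interpret sturm_cocycle \<alpha> "cf_denom \<alpha>" "cf_numer \<alpha>" N \<theta> "Re E" lam
    using golden_convergents_cf[OF assms(3,1,2)] by (simp add: sturm_cocycle_def)
  have "u (n + 1) + u (n - 1) + of_real (lam * jump (of_int n * \<alpha> + \<theta>)) * u n = of_real (Re E) * u n" for n
    using eq[of n] \<open>E = of_real (Re E)\<close> sturm_pot_eq_jump[OF assms(1,2)] by simp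
  then have "is_solution (\<lambda>n. Re (u n))" "is_solution (\<lambda>n. Im (u n))"
    by (rule solution_of_complex)+
  moreover have "vanishes_at_infinity (\<lambda>n. Re (u n))" "vanishes_at_infinity (\<lambda>n. Im (u n))"
    by (rule vanishes_at_infinity_dominated[OF decay]; simp add: abs_Re_le_cmod abs_Im_le_cmod)+
  moreover have "(\<lambda>n. Re (u n)) \<noteq> (\<lambda>_. 0) \<or> (\<lambda>n. Im (u n)) \<noteq> (\<lambda>_. 0)"
    using nonzero by (auto simp: complex_eq_iff fun_eq_iff)
  ultimately show False using no_decaying_solution by blast
qed

end
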